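(* Let $f_d(\mathbf{x})=\psi_{3d}(\sqrt d\,\langle\mathbf{x}^{(1)},\mathbf{x}^{(2)}\rangle)$. There are absolute constants $C_1,C_2$ such that for all $d\ge2$ and $K\in\mathbb{N}$ there is a depth-3 ReLU network $f_{d,K}$ with hidden widths at most $\omega_{d,K}:=\max(6d+2,2Kd)$ such that $\|f_d-f_{d,K}\|_{L^\infty}\le C_1\frac{d^{5/2}}{K}$ and $R_3(f_{d,K};\omega_{d,K})\le C_2d^{5/2}$.
   Context: $\mathcal{X}_d=\mathbb{S}^{d-1}\times\mathbb{S}^{d-1}\subset\mathbb{R}^{2d}$; $\mathbf{x}^{(1)},\mathbf{x}^{(2)}$ are the first and last $d$ coordinates; $\|\cdot\|_{L^\infty}$ is the sup norm over $\mathcal{X}_d$. The sawtooth $\psi_n(t)=-2n[t+1]_++2n[t-1]_++4n\sum_{j=1}^n\big((-1)^{j+n+1}[t-\tfrac{2j-1}{2n}]_++(-1)^{j+n}[t+\tfrac{2j-1}{2n}]_+\big)$. A depth-3 network is $f_\phi(\mathbf{x})=\mathbf{w}_3^\top[\mathbf{W}_2[\mathbf{W}_1\mathbf{x}+\mathbf{b}_1]_++\mathbf{b}_2]_++b_3$; $R_3(f;\omega)=\inf\{\|\phi\|^2/3: f_\phi=f\text{ on }\mathcal{X}_d,\ \text{hidden widths}\le\omega\}$ with $\|\phi\|^2$ the sum of squares of all weights and biases. *)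

theory Defs
  imports Complex_Main
begin

text \<open>Points of R^(2d) are functions nat => real; coordinates 0..d-1 form x^(1),
  coordinates d..2d-1 form x^(2), all other coordinates are zero.\<close>

definition relu :: "real \<Rightarrow> real" where
  "relu t = max t 0"

definition Xd :: "nat \<Rightarrow> (nat \<Rightarrow> real) set" where
  "Xd d = {x. (\<Sum>i<d. (x i)\<^sup>2) = 1 \<and> (\<Sum>i<d. (x (d + i))\<^sup>2) = 1 \<and> (\<forall>i\<ge>2*d. x i = 0)}"

definition inner12 :: "nat \<Rightarrow> (nat \<Rightarrow> real) \<Rightarrow> real" where
  "inner12 d x = (\<Sum>i<d. x i * x (d + i))"

definition sawtooth :: "nat \<Rightarrow> real \<Rightarrow> real" where
  "sawtooth n t = - 2 * real n * relu (t + 1) + 2 * real n * relu (t - 1)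
     + 4 * real n * (\<Sum>j=1..n.
         (-1) ^ (j + n + 1) * relu (t - (2 * real j - 1) / (2 * real n))
       + (-1) ^ (j + n) * relu (t + (2 * real j - 1) / (2 * real n)))"

definition f_target :: "nat \<Rightarrow> (nat \<Rightarrow> real) \<Rightarrow> real" where
  "f_target d x = sawtooth (3 * d) (sqrt (real d) * inner12 d x)"

text \<open>Parameters of a depth-3 network with input dimension 2d and hidden widths m1, m2:
  (W1, b1, W2, b2, w3, b3) with W1 : m1 x 2d, b1 : m1, W2 : m2 x m1, b2 : m2, w3 : m2,
  b3 scalar; only the entries in these index ranges are meaningful.\<close>

type_synonym params =
  "(nat \<Rightarrow> nat \<Rightarrow> real) \<times> (nat \<Rightarrow> real) \<times> (nat \<Rightarrow> nat \<Rightarrow> real) \<times> (nat \<Rightarrow> real) \<times> (nat \<Rightarrow> real) \<times> real"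

fun net_eval :: "nat \<Rightarrow> nat \<Rightarrow> nat \<Rightarrow> params \<Rightarrow> (nat \<Rightarrow> real) \<Rightarrow> real" where
  "net_eval d m1 m2 (W1, b1, W2, b2, w3, b3) x =
     (\<Sum>k<m2. w3 k * relu ((\<Sum>j<m1. W2 k j * relu ((\<Sum>i<2*d. W1 j i * x i) + b1 j)) + b2 k)) + b3"

fun param_norm2 :: "nat \<Rightarrow> nat \<Rightarrow> nat \<Rightarrow> params \<Rightarrow> real" where
  "param_norm2 d m1 m2 (W1, b1, W2, b2, w3, b3) =
     (\<Sum>j<m1. \<Sum>i<2*d. (W1 j i)\<^sup>2) + (\<Sum>j<m1. (b1 j)\<^sup>2)
   + (\<Sum>k<m2. \<Sum>j<m1. (W2 k j)\<^sup>2) + (\<Sum>k<m2. (b2 k)\<^sup>2)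
   + (\<Sum>k<m2. (w3 k)\<^sup>2) + b3\<^sup>2"

definition R3 :: "nat \<Rightarrow> ((nat \<Rightarrow> real) \<Rightarrow> real) \<Rightarrow> nat \<Rightarrow> real" where
  "R3 d f \<omega> = Inf {param_norm2 d m1 m2 \<phi> / 3 | m1 m2 \<phi>.
      m1 \<le> \<omega> \<and> m2 \<le> \<omega> \<and> (\<forall>x\<in>Xd d. net_eval d m1 m2 \<phi> x = f x)}"

end

theory Submission
  imports Defs
begin

text \<open>On X_d the vector u = x^(1) + x^(2) has |u_i| <= 2 and |u|^2 = 2 + 2 <x^(1), x^(2)>, and
  u_i^2 = relu(u_i)^2 + relu(-u_i)^2. A Riemann sum of K ReLUs approximates relu(v)^2 on v <= 2
  within 4/K, so a first hidden layer of 2Kd units followed by a linear map computes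
  sqrt d <x^(1), x^(2)> up to 4 d^(3/2) / K. The sawtooth psi_n is a combination of 2n + 2 ReLUs,
  which gives the second hidden layer and the output; as its slopes are partial sums of
  alternating coefficients, psi_n is 12n-Lipschitz, and the error becomes 144 d^(5/2) / K.
  Positive homogeneity of relu allows rescaling consecutive layers against each other, and the
  scalings d^(1/4) and (d^(5/4) / K)^(1/2) keep the squared parameter norm below 1260 d^(5/2).\<close>

lemma relu_mult_pos: "0 < c \<Longrightarrow> relu (c * z) = c * relu z"
  by (simp add: relu_def max_mult_distrib_left)

lemma abs_relu_diff_le: "\<bar>relu a - relu b\<bar> \<le> \<bar>a - b\<bar>"
  by (simp add: relu_def max_def abs_if)

lemma power2_relu_add_power2_relu_minus: "(relu u)\<^sup>2 + (relu (- u))\<^sup>2 = u\<^sup>2"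
  by (simp add: relu_def max_def power2_eq_square)

lemma relu_power2_step:
  assumes "0 \<le> h"
  shows "\<bar>(relu z)\<^sup>2 - (relu (z - h))\<^sup>2 - 2 * h * relu z\<bar> \<le> h\<^sup>2"
proof -
  consider "z \<le> 0" | "0 < z" "z \<le> h" | "h < z" by linarith
  then show ?thesis
  proof cases
    case 2
    then have "z * (2 * h - z) \<ge> 0" "z * (2 * h - z) \<le> h\<^sup>2"
      using zero_le_power2[of "z - h"] by (simp_all add: power2_eq_square algebra_simps)
    with 2 show ?thesis by (simp add: relu_def power2_eq_square algebra_simps)
  qed (use assms in \<open>simp_all add: relu_def power2_eq_square algebra_simps\<close>)
qed

text \<open>relu(u)^2 is the integral of 2 relu(u - s) over s >= 0; the sum is its left Riemann sum
  with step h.\<close>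

lemma relu_power2_riemann_sum:
  assumes "0 \<le> h" and "u \<le> real K * h"
  shows "\<bar>(\<Sum>k<K. 2 * h * relu (u - real k * h)) - (relu u)\<^sup>2\<bar> \<le> real K * h\<^sup>2"
proof -
  define f where "f k = (relu (u - real k * h))\<^sup>2" for k
  have "(\<Sum>k<K. f k - f (Suc k)) = f 0 - f K"
    by (rule sum_lessThan_telescope')
  then have "(relu u)\<^sup>2 = (\<Sum>k<K. f k - f (Suc k))"
    using assms(2) by (simp add: f_def relu_def)
  then have "\<bar>(\<Sum>k<K. 2 * h * relu (u - real k * h)) - (relu u)\<^sup>2\<bar>
      = \<bar>\<Sum>k<K. (f k - f (Suc k)) - 2 * h * relu (u - real k * h)\<bar>"
    by (simp add: sum_subtractf abs_minus_commute)
  also have "\<dots> \<le> (\<Sum>k<K. h\<^sup>2)"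
  proof (rule order_trans[OF sum_abs sum_mono])
    fix k
    have shift: "u - real (Suc k) * h = (u - real k * h) - h"
      by (simp add: algebra_simps)
    show "\<bar>(f k - f (Suc k)) - 2 * h * relu (u - real k * h)\<bar> \<le> h\<^sup>2"
      using relu_power2_step[OF assms(1), of "u - real k * h"] unfolding f_def shift .
  qed
  finally show ?thesis by simp
qed

lemma relu_sum_diff_affine:
  fixes a \<tau> :: "'a \<Rightarrow> real"
  assumes "finite M" and "s \<le> t" and "\<forall>m\<in>M. \<tau> m \<le> s \<or> t \<le> \<tau> m"
  shows "(\<Sum>m\<in>M. a m * relu (t - \<tau> m)) - (\<Sum>m\<in>M. a m * relu (s - \<tau> m))
      = (t - s) * (\<Sum>m\<in>{m\<in>M. \<tau> m \<le> s}. a m)"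
proof -
  have "(\<Sum>m\<in>M. a m * relu (t - \<tau> m)) - (\<Sum>m\<in>M. a m * relu (s - \<tau> m))
      = (t - s) * (\<Sum>m\<in>M. if \<tau> m \<le> s then a m else 0)"
    unfolding sum_subtractf[symmetric] sum_distrib_left
    by (rule sum.cong) (use assms(2,3) in \<open>auto simp: relu_def algebra_simps\<close>)
  also have "\<dots> = (t - s) * (\<Sum>m\<in>{m\<in>M. \<tau> m \<le> s}. a m)"
    using assms(1) by (simp add: sum.inter_filter)
  finally show ?thesis .
qed

text \<open>Induction on the number of breakpoints strictly between s and t: splitting at one of
  them reduces both halves, and without breakpoints the sum is affine on [s, t].\<close>

lemma relu_sum_lipschitz_ordered:
  fixes a \<tau> :: "'a \<Rightarrow> real"
  assumes fin: "finite M" and bound: "\<And>u. \<bar>\<Sum>m\<in>{m\<in>M. \<tau> m \<le> u}. a m\<bar> \<le> L"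
    and "s \<le> t"
  shows "\<bar>(\<Sum>m\<in>M. a m * relu (t - \<tau> m)) - (\<Sum>m\<in>M. a m * relu (s - \<tau> m))\<bar> \<le> L * (t - s)"
  using \<open>s \<le> t\<close>
proof (induction "card {m\<in>M. s < \<tau> m \<and> \<tau> m < t}" arbitrary: s t rule: less_induct)
  case less
  let ?g = "\<lambda>t. \<Sum>m\<in>M. a m * relu (t - \<tau> m)"
  show ?case
  proof (cases "\<exists>m\<in>M. s < \<tau> m \<and> \<tau> m < t")
    case False
    then have "?g t - ?g s = (t - s) * (\<Sum>m\<in>{m\<in>M. \<tau> m \<le> s}. a m)"
      by (intro relu_sum_diff_affine[OF fin less.prems]) force
    then show ?thesis
      using mult_left_mono[OF bound[of s], of "t - s"] less.prems by (simp add: abs_mult mult.commute)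
  next
    case True
    then obtain b where b: "b \<in> \<tau> ` M" "s < b" "b < t" by blast
    have fewer: "card {m\<in>M. s' < \<tau> m \<and> \<tau> m < t'} < card {m\<in>M. s < \<tau> m \<and> \<tau> m < t}"
      if "s \<le> s'" "t' \<le> t" "b \<notin> {s'<..<t'}" for s' t'
      by (rule psubset_card_mono) (use fin b that in \<open>auto\<close>)
    have "\<bar>?g b - ?g s\<bar> \<le> L * (b - s)" "\<bar>?g t - ?g b\<bar> \<le> L * (t - b)"
      using less.hyps[OF fewer] b by auto
    then show ?thesis by (simp add: algebra_simps)
  qed
qed

lemma relu_sum_lipschitz:
  fixes a \<tau> :: "'a \<Rightarrow> real"
  assumes "finite M" and "\<And>u. \<bar>\<Sum>m\<in>{m\<in>M. \<tau> m \<le> u}. a m\<bar> \<le> L"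
  shows "\<bar>(\<Sum>m\<in>M. a m * relu (t - \<tau> m)) - (\<Sum>m\<in>M. a m * relu (s - \<tau> m))\<bar> \<le> L * \<bar>t - s\<bar>"
  using relu_sum_lipschitz_ordered[OF assms, of s t] relu_sum_lipschitz_ordered[OF assms, of t s]
  by (cases "s \<le> t") (simp_all add: abs_minus_commute)

lemma sum_minus_one_power_interval:
  "a \<le> b \<Longrightarrow> 2 * (\<Sum>j\<in>{a..<b}. (-1::real) ^ j) = (-1) ^ a - (-1) ^ b"
  by (induction b rule: dec_induct) (simp_all add: algebra_simps)

lemma abs_sum_minus_one_power_convex_le_1:
  fixes S :: "nat set"
  assumes fin: "finite S" and convex: "\<And>x y z. x \<in> S \<Longrightarrow> z \<in> S \<Longrightarrow> x \<le> y \<Longrightarrow> y \<le> z \<Longrightarrow> y \<in> S"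
  shows "\<bar>\<Sum>j\<in>S. (-1::real) ^ (j + p)\<bar> \<le> 1"
proof (cases "S = {}")
  case False
  have "S = {Min S..<Suc (Max S)}"
  proof (intro antisym subsetI)
    fix y assume "y \<in> {Min S..<Suc (Max S)}"
    then show "y \<in> S"
      using convex[OF Min_in[OF fin False] Max_in[OF fin False]] by simp
  qed (use fin in \<open>simp add: less_Suc_eq_le\<close>)
  moreover have "Min S \<le> Suc (Max S)"
    using Min_le[OF fin Max_in[OF fin False]] by simp
  ultimately have "2 * (\<Sum>j\<in>S. (-1::real) ^ j) = (-1) ^ Min S - (-1) ^ Suc (Max S)"
    using sum_minus_one_power_interval by metis
  moreover have "\<bar>(-1::real) ^ Min S - (-1) ^ Suc (Max S)\<bar> \<le> 2"
    by (cases "even (Min S)"; cases "even (Max S)") simp_all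
  moreover have "(\<Sum>j\<in>S. (-1::real) ^ (j + p)) = (-1) ^ p * (\<Sum>j\<in>S. (-1) ^ j)"
    by (simp add: power_add sum_distrib_left mult.commute)
  ultimately show ?thesis
    by (simp add: abs_mult)
qed simp

lemma alternating_relu_sum_lipschitz:
  fixes \<tau> :: "nat \<Rightarrow> real"
  assumes "mono \<tau> \<or> antimono \<tau>"
  shows "\<bar>(\<Sum>j\<in>{1..n}. (-1) ^ (j + p) * relu (t - \<tau> j))
         - (\<Sum>j\<in>{1..n}. (-1) ^ (j + p) * relu (s - \<tau> j))\<bar> \<le> \<bar>t - s\<bar>"
proof -
  have "\<bar>\<Sum>j\<in>{j\<in>{1..n}. \<tau> j \<le> u}. (-1::real) ^ (j + p)\<bar> \<le> 1" for u
  proof (rule abs_sum_minus_one_power_convex_le_1)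
    fix x y z assume "x \<in> {j\<in>{1..n}. \<tau> j \<le> u}" "z \<in> {j\<in>{1..n}. \<tau> j \<le> u}" "x \<le> y" "y \<le> z"
    with assms show "y \<in> {j\<in>{1..n}. \<tau> j \<le> u}"
      by (auto dest: monoD antimonoD)
  qed simp
  then show ?thesis
    using relu_sum_lipschitz[where M="{1..n}" and a="\<lambda>j. (-1) ^ (j + p)" and L=1] by simp
qed

lemma sum_lessThan_mult:
  fixes f :: "nat \<Rightarrow> 'a::comm_monoid_add"
  shows "(\<Sum>j<n * k. f j) = (\<Sum>i<n. \<Sum>r<k. f (i * k + r))"
proof -
  have "sum f {i * k..<i * k + k} = (\<Sum>r<k. f (i * k + r))" for i
    using sum.shift_bounds_nat_ivl[of f 0 "i * k" k] by (simp add: atLeast0LessThan add.commute)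
  then show ?thesis
    by (simp flip: sum.nat_group)
qed

definition sawtooth_knot :: "nat \<Rightarrow> nat \<Rightarrow> real" where
  "sawtooth_knot n j = (2 * real j - 1) / (2 * real n)"

lemma mono_sawtooth_knot: "mono (sawtooth_knot n)"
  by (rule monoI) (simp add: sawtooth_knot_def divide_right_mono)

lemma abs_sawtooth_knot_le_1: "1 \<le> j \<Longrightarrow> j \<le> n \<Longrightarrow> \<bar>sawtooth_knot n j\<bar> \<le> 1"
  by (simp add: sawtooth_knot_def abs_div_pos divide_le_eq_1)

lemma sawtooth_via_knots:
  "sawtooth n t = - 2 * real n * relu (t + 1) + 2 * real n * relu (t - 1)
     + 4 * real n * ((\<Sum>j\<in>{1..n}. (-1) ^ (j + (n + 1)) * relu (t - sawtooth_knot n j))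
                   + (\<Sum>j\<in>{1..n}. (-1) ^ (j + n) * relu (t - - sawtooth_knot n j)))"
  unfolding sawtooth_def sawtooth_knot_def sum.distrib by (simp add: add.assoc)

lemma sawtooth_lipschitz: "\<bar>sawtooth n t - sawtooth n s\<bar> \<le> 12 * real n * \<bar>t - s\<bar>"
proof -
  have "mono (\<lambda>j. - sawtooth_knot n j) \<or> antimono (\<lambda>j. - sawtooth_knot n j)"
    using mono_sawtooth_knot[of n] by (auto simp: mono_def antimono_def)
  note knots =
    alternating_relu_sum_lipschitz[OF disjI1[OF mono_sawtooth_knot[of n]], where n=n and p="n + 1" and t=t and s=s]
    alternating_relu_sum_lipschitz[OF this, where n=n and p=n and t=t and s=s]
  have ends: "\<bar>relu (t + c) - relu (s + c)\<bar> \<le> \<bar>t - s\<bar>" for c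
    using abs_relu_diff_le[of "t + c" "s + c"] by simp
  have scaled: "\<bar>c * x\<bar> \<le> c * \<bar>t - s\<bar>" if "\<bar>x\<bar> \<le> \<bar>t - s\<bar>" "0 \<le> c" for c x
    using that by (simp add: abs_mult mult_left_mono)
  define A where "A r = (\<Sum>j\<in>{1..n}. (-1) ^ (j + (n + 1)) * relu (r - sawtooth_knot n j))" for r
  define B where "B r = (\<Sum>j\<in>{1..n}. (-1) ^ (j + n) * relu (r - - sawtooth_knot n j))" for r
  have eq: "sawtooth n t - sawtooth n s = - (2 * real n * (relu (t + 1) - relu (s + 1)))
      + 2 * real n * (relu (t + -1) - relu (s + -1)) + 4 * real n * (A t - A s) + 4 * real n * (B t - B s)"
    unfolding sawtooth_via_knots A_def[symmetric] B_def[symmetric] by (simp add: algebra_simps)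
  have n2: "0 \<le> 2 * real n" and n4: "0 \<le> 4 * real n"
    by simp_all
  show ?thesis
    using eq scaled[OF ends[of 1] n2] scaled[OF ends[of "-1"] n2]
      scaled[OF knots(1)[folded A_def] n4] scaled[OF knots(2)[folded B_def] n4]
    unfolding abs_le_iff by linarith
qed

definition sawtooth_breakpoint :: "nat \<Rightarrow> nat \<Rightarrow> real" where
  "sawtooth_breakpoint n m =
     (if m < 2 * n then (-1) ^ m * sawtooth_knot n (m div 2 + 1) else if m = 2 * n then -1 else 1)"

definition sawtooth_coeff :: "nat \<Rightarrow> nat \<Rightarrow> real" where
  "sawtooth_coeff n m =
     (if m < 2 * n then (-1) ^ m * 4 * real n * (-1) ^ (m div 2 + n)
      else if m = 2 * n then - 2 * real n else 2 * real n)"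

lemma sawtooth_eq_relu_sum:
  "sawtooth n t = (\<Sum>m<2 * n + 2. sawtooth_coeff n m * relu (t - sawtooth_breakpoint n m))"
proof -
  define F where "F m = sawtooth_coeff n m * relu (t - sawtooth_breakpoint n m)" for m
  have pairs: "(\<Sum>m<n * 2. F m) = (\<Sum>j<n. F (j * 2) + F (j * 2 + 1))"
    by (simp only: sum_lessThan_mult) (simp add: numeral_2_eq_2)
  have "(\<Sum>j<n. F (j * 2) + F (j * 2 + 1))
      = 4 * real n * ((\<Sum>j<n. (-1) ^ (Suc j + (n + 1)) * relu (t - sawtooth_knot n (Suc j)))
                    + (\<Sum>j<n. (-1) ^ (Suc j + n) * relu (t - - sawtooth_knot n (Suc j))))"
    by (simp add: F_def sawtooth_coeff_def sawtooth_breakpoint_def sum_distrib_left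
        sum.distrib[symmetric] algebra_simps)
  also have "\<dots> = 4 * real n * ((\<Sum>j\<in>{1..n}. (-1) ^ (j + (n + 1)) * relu (t - sawtooth_knot n j))
                    + (\<Sum>j\<in>{1..n}. (-1) ^ (j + n) * relu (t - - sawtooth_knot n j)))"
    by (simp only: sum.atLeast1_atMost_eq One_nat_def)
  finally have "(\<Sum>m<2 * n + 2. F m) = F (2 * n) + F (2 * n + 1) + \<dots>"
    using pairs by (simp add: mult.commute)
  then show ?thesis
    unfolding sawtooth_via_knots F_def
    by (simp add: sawtooth_coeff_def sawtooth_breakpoint_def algebra_simps)
qed

lemma abs_sawtooth_breakpoint_le_1: "\<bar>sawtooth_breakpoint n m\<bar> \<le> 1"
  by (auto simp: sawtooth_breakpoint_def abs_mult intro: abs_sawtooth_knot_le_1)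

lemma abs_sawtooth_coeff_le: "\<bar>sawtooth_coeff n m\<bar> \<le> 4 * real n"
  by (simp add: sawtooth_coeff_def abs_mult)

lemma abs_coord_le_1_if_in_Xd:
  assumes "x \<in> Xd d" and "i < d"
  shows "\<bar>x i\<bar> \<le> 1" and "\<bar>x (d + i)\<bar> \<le> 1"
proof -
  have "(x i)\<^sup>2 \<le> (\<Sum>i<d. (x i)\<^sup>2)" "(x (d + i))\<^sup>2 \<le> (\<Sum>i<d. (x (d + i))\<^sup>2)"
    using assms(2) by (intro member_le_sum; simp)+
  then show "\<bar>x i\<bar> \<le> 1" "\<bar>x (d + i)\<bar> \<le> 1"
    using assms(1) by (simp_all add: Xd_def abs_square_le_1)
qed

lemma sum_power2_coord_sum_Xd:
  assumes "x \<in> Xd d"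
  shows "(\<Sum>i<d. (x i + x (d + i))\<^sup>2) = 2 + 2 * inner12 d x"
  using assms by (simp add: Xd_def inner12_def power2_sum sum.distrib sum_distrib_left mult.assoc)

text \<open>First-layer unit j = g K + k (k < K) reads coordinate g div 2 of x^(1) + x^(2) with the
  sign (-1)^g and the offset k h, h = 2 / K, of the Riemann sum for relu^2.\<close>

definition hidden_coord :: "nat \<Rightarrow> nat \<Rightarrow> nat" where
  "hidden_coord K j = j div K div 2"

definition hidden_sign :: "nat \<Rightarrow> nat \<Rightarrow> real" where
  "hidden_sign K j = (-1) ^ (j div K)"

definition hidden_offset :: "nat \<Rightarrow> nat \<Rightarrow> real" where
  "hidden_offset K j = real (j mod K) * (2 / real K)"

definition hidden_unit :: "nat \<Rightarrow> nat \<Rightarrow> nat \<Rightarrow> (nat \<Rightarrow> real) \<Rightarrow> real" where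
  "hidden_unit d K j x =
     hidden_sign K j * (x (hidden_coord K j) + x (d + hidden_coord K j)) - hidden_offset K j"

definition inner_approx :: "nat \<Rightarrow> nat \<Rightarrow> (nat \<Rightarrow> real) \<Rightarrow> real" where
  "inner_approx d K x =
     2 * sqrt (real d) / real K * (\<Sum>j<2 * K * d. relu (hidden_unit d K j x)) - sqrt (real d)"

lemma sum_relu_hidden_unit:
  "(\<Sum>j<2 * K * d. relu (hidden_unit d K j x))
     = (\<Sum>i<d. (\<Sum>k<K. relu ((x i + x (d + i)) - real k * (2 / real K)))
            + (\<Sum>k<K. relu (- (x i + x (d + i)) - real k * (2 / real K))))"
proof -
  have "(i * 2 * K + k) div K = i * 2" "(K + i * 2 * K + k) div K = Suc (i * 2)"
    "(i * 2 * K + k) mod K = k" "(K + i * 2 * K + k) mod K = k" if "k < K" for i k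
    using that by (simp_all add: add.assoc)
  then have unit: "hidden_unit d K (i * 2 * K + k) x = (x i + x (d + i)) - real k * (2 / real K)"
      "hidden_unit d K (K + i * 2 * K + k) x = - (x i + x (d + i)) - real k * (2 / real K)"
    if "k < K" for i k
    using that by (simp_all add: hidden_unit_def hidden_coord_def hidden_sign_def hidden_offset_def)
  let ?F = "\<lambda>j. relu (hidden_unit d K j x)"
  have "(\<Sum>j<2 * K * d. ?F j) = (\<Sum>j<d * 2 * K. ?F j)"
    by (simp add: mult_ac)
  also have "\<dots> = (\<Sum>i<d. \<Sum>r<2. \<Sum>k<K. ?F ((i * 2 + r) * K + k))"
    by (simp only: sum_lessThan_mult)
  also have "\<dots> = (\<Sum>i<d. (\<Sum>k<K. ?F ((i * 2 + 0) * K + k)) + (\<Sum>k<K. ?F ((i * 2 + 1) * K + k)))"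
    by (simp only: numeral_2_eq_2 sum.lessThan_Suc lessThan_0 sum.empty add_0 One_nat_def)
  finally show ?thesis
    by (simp add: unit)
qed

lemma abs_inner_approx_error:
  assumes x: "x \<in> Xd d" and K: "1 \<le> K"
  shows "\<bar>inner_approx d K x - sqrt (real d) * inner12 d x\<bar> \<le> 4 * real d * sqrt (real d) / real K"
proof -
  define h where "h = 2 / real K"
  define u where "u i = x i + x (d + i)" for i
  define R where "R v = (\<Sum>k<K. 2 * h * relu (v - real k * h))" for v
  define E where "E i = (R (u i) - (relu (u i))\<^sup>2) + (R (- u i) - (relu (- u i))\<^sup>2)" for i
  have "inner_approx d K x = sqrt (real d) * ((\<Sum>i<d. R (u i) + R (- u i)) / 2 - 1)"
    unfolding inner_approx_def sum_relu_hidden_unit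
    by (simp add: R_def u_def h_def sum_distrib_left sum.distrib sum_divide_distrib algebra_simps)
  moreover have "(\<Sum>i<d. (relu (u i))\<^sup>2 + (relu (- u i))\<^sup>2) = 2 + 2 * inner12 d x"
    using sum_power2_coord_sum_Xd[OF x] by (simp only: power2_relu_add_power2_relu_minus u_def)
  ultimately have diff: "inner_approx d K x - sqrt (real d) * inner12 d x = sqrt (real d) / 2 * (\<Sum>i<d. E i)"
    by (simp add: E_def sum.distrib sum_subtractf algebra_simps)
  have "\<bar>E i\<bar> \<le> 8 / real K" if "i < d" for i
  proof -
    have "u i \<le> real K * h" "- u i \<le> real K * h"
      using abs_coord_le_1_if_in_Xd[OF x that] K by (auto simp: u_def h_def)
    then show ?thesis
      using relu_power2_riemann_sum[of h "u i" K] relu_power2_riemann_sum[of h "- u i" K] K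
      by (simp add: E_def R_def h_def power2_eq_square abs_le_iff)
  qed
  then have sum_E: "\<bar>\<Sum>i<d. E i\<bar> \<le> real d * (8 / real K)"
    using order_trans[OF sum_abs sum_bounded_above[where A="{..<d}" and K="8 / real K"]] by simp
  have "\<bar>sqrt (real d) / 2 * (\<Sum>i<d. E i)\<bar> \<le> sqrt (real d) / 2 * (real d * (8 / real K))"
    using mult_left_mono[OF sum_E, of "sqrt (real d) / 2"] by (simp add: abs_mult)
  then show ?thesis
    unfolding diff by simp
qed

definition hidden_weight :: "nat \<Rightarrow> nat \<Rightarrow> nat \<Rightarrow> nat \<Rightarrow> real" where
  "hidden_weight d K j i =
     (if i = hidden_coord K j \<or> i = d + hidden_coord K j then hidden_sign K j else 0)"

lemma hidden_coord_less:
  assumes "j < 2 * K * d"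
  shows "hidden_coord K j < d"
proof -
  have "j div K < d * 2"
    using assms by (intro less_mult_imp_div_less) (simp add: mult_ac)
  then show ?thesis
    by (simp add: hidden_coord_def less_mult_imp_div_less)
qed

lemma sum_hidden_weight_mult:
  assumes "j < 2 * K * d"
  shows "(\<Sum>i<2 * d. hidden_weight d K j i * f i)
    = hidden_sign K j * (f (hidden_coord K j) + f (d + hidden_coord K j))"
proof -
  let ?c = "hidden_coord K j"
  have "(\<Sum>i<2 * d. hidden_weight d K j i * f i) = (\<Sum>i\<in>{?c, d + ?c}. hidden_sign K j * f i)"
    using hidden_coord_less[OF assms]
    by (intro sum.mono_neutral_cong_right) (auto simp: hidden_weight_def)
  also have "\<dots> = hidden_sign K j * (f ?c + f (d + ?c))"
    using hidden_coord_less[OF assms] by (simp add: distrib_left)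
  finally show ?thesis .
qed

lemma hidden_unit_eq_sum:
  "j < 2 * K * d \<Longrightarrow> hidden_unit d K j x = (\<Sum>i<2 * d. hidden_weight d K j i * x i) - hidden_offset K j"
  by (simp add: sum_hidden_weight_mult hidden_unit_def)

lemma sum_power2_hidden_weight: "j < 2 * K * d \<Longrightarrow> (\<Sum>i<2 * d. (hidden_weight d K j i)\<^sup>2) = 2"
  using sum_hidden_weight_mult[of j K d "hidden_weight d K j"]
  by (simp add: power2_eq_square hidden_weight_def hidden_sign_def flip: power_add)

text \<open>The scalings a (between the first two layers) and q (between the last two) leave the
  function unchanged by positive homogeneity of relu; they are chosen later to balance the
  parameter norm.\<close>

definition sawtooth_net :: "nat \<Rightarrow> nat \<Rightarrow> real \<Rightarrow> real \<Rightarrow> params" where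
  "sawtooth_net d K q a =
     ((\<lambda>j i. a * hidden_weight d K j i),
      (\<lambda>j. - a * hidden_offset K j),
      (\<lambda>m j. 2 * q * sqrt (real d) / (real K * a)),
      (\<lambda>m. - q * (sqrt (real d) + sawtooth_breakpoint (3 * d) m)),
      (\<lambda>m. sawtooth_coeff (3 * d) m / q),
      0)"

lemma net_eval_sawtooth_net:
  assumes q: "0 < q" and a: "0 < a"
  shows "net_eval d (2 * K * d) (6 * d + 2) (sawtooth_net d K q a) x
    = sawtooth (3 * d) (inner_approx d K x)"
proof -
  have second_layer: "(\<Sum>j<2 * K * d. 2 * q * sqrt (real d) / (real K * a) *
        relu ((\<Sum>i<2 * d. a * hidden_weight d K j i * x i) + - a * hidden_offset K j))
        + - q * (sqrt (real d) + sawtooth_breakpoint (3 * d) m)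
      = q * (inner_approx d K x - sawtooth_breakpoint (3 * d) m)" for m
  proof -
    let ?c = "2 * q * sqrt (real d) / (real K * a)"
    have "(\<Sum>j<2 * K * d. ?c * relu ((\<Sum>i<2 * d. a * hidden_weight d K j i * x i) + - a * hidden_offset K j))
        = (\<Sum>j<2 * K * d. ?c * (a * relu (hidden_unit d K j x)))"
    proof (rule sum.cong[OF refl])
      fix j assume "j \<in> {..<2 * K * d}"
      then have "(\<Sum>i<2 * d. a * hidden_weight d K j i * x i) + - a * hidden_offset K j
          = a * hidden_unit d K j x"
        by (simp add: hidden_unit_eq_sum sum_distrib_left mult.assoc algebra_simps)
      then show "?c * relu ((\<Sum>i<2 * d. a * hidden_weight d K j i * x i) + - a * hidden_offset K j)
          = ?c * (a * relu (hidden_unit d K j x))"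
        using a by (simp add: relu_mult_pos)
    qed
    then show ?thesis
      using a by (simp add: inner_approx_def sum_distrib_left algebra_simps)
  qed
  have "net_eval d (2 * K * d) (6 * d + 2) (sawtooth_net d K q a) x
      = (\<Sum>m<2 * (3 * d) + 2.
           sawtooth_coeff (3 * d) m * relu (inner_approx d K x - sawtooth_breakpoint (3 * d) m))"
    unfolding sawtooth_net_def net_eval.simps second_layer using q by (simp add: relu_mult_pos)
  then show ?thesis
    by (simp add: sawtooth_eq_relu_sum)
qed

lemma sum_power2_hidden_weights:
  "(\<Sum>j<2 * K * d. \<Sum>i<2 * d. (a * hidden_weight d K j i)\<^sup>2) = 4 * real K * real d * a\<^sup>2"
  by (simp add: power_mult_distrib sum_power2_hidden_weight flip: sum_distrib_left)

lemma sum_power2_hidden_offsets_le: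
  assumes "1 \<le> K"
  shows "(\<Sum>j<2 * K * d. (- a * hidden_offset K j)\<^sup>2) \<le> 8 * real K * real d * a\<^sup>2"
proof -
  have "(- a * hidden_offset K j)\<^sup>2 \<le> 4 * a\<^sup>2" for j
  proof -
    have "0 \<le> hidden_offset K j" "hidden_offset K j \<le> 2"
      using assms by (simp_all add: hidden_offset_def field_simps)
    then have "(hidden_offset K j)\<^sup>2 \<le> 2\<^sup>2"
      by (intro power_mono)
    then show ?thesis
      using mult_left_mono[of "(hidden_offset K j)\<^sup>2" 4 "a\<^sup>2"] by (simp add: power_mult_distrib mult.commute)
  qed
  then show ?thesis
    using sum_bounded_above[of "{..<2 * K * d}" "\<lambda>j. (- a * hidden_offset K j)\<^sup>2" "4 * a\<^sup>2"] by simp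
qed

lemma sum_power2_second_layer_biases_le:
  "(\<Sum>m<6 * d + 2. (- q * (sqrt (real d) + sawtooth_breakpoint (3 * d) m))\<^sup>2)
    \<le> real (6 * d + 2) * (q\<^sup>2 * (sqrt (real d) + 1)\<^sup>2)"
proof -
  have "(sqrt (real d) + sawtooth_breakpoint (3 * d) m)\<^sup>2 \<le> (sqrt (real d) + 1)\<^sup>2" for m
  proof (subst power2_le_iff_abs_le)
    show "0 \<le> sqrt (real d) + 1"
      by simp
    show "\<bar>sqrt (real d) + sawtooth_breakpoint (3 * d) m\<bar> \<le> sqrt (real d) + 1"
      using abs_sawtooth_breakpoint_le_1[of "3 * d" m] real_sqrt_ge_zero[of "real d"]
      unfolding abs_le_iff by linarith
  qed
  then show ?thesis
    using sum_bounded_above[of "{..<6 * d + 2}" "\<lambda>m. (- q * (sqrt (real d) + sawtooth_breakpoint (3 * d) m))\<^sup>2"]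
    by (simp add: power_mult_distrib mult_left_mono)
qed

lemma sum_power2_output_weights_le:
  "(\<Sum>m<6 * d + 2. (sawtooth_coeff (3 * d) m / q)\<^sup>2) \<le> real (6 * d + 2) * ((12 * real d)\<^sup>2 / q\<^sup>2)"
proof -
  have "(sawtooth_coeff (3 * d) m / q)\<^sup>2 \<le> (12 * real d)\<^sup>2 / q\<^sup>2" for m
    using power_mono[OF abs_sawtooth_coeff_le[of "3 * d" m] abs_ge_zero, of 2]
    by (simp add: power_divide divide_right_mono)
  then show ?thesis
    using sum_bounded_above[of "{..<6 * d + 2}" "\<lambda>m. (sawtooth_coeff (3 * d) m / q)\<^sup>2" "(12 * real d)\<^sup>2 / q\<^sup>2"]
    by simp
qed

lemma param_norm2_sawtooth_net_le:
  assumes a: "0 < a" and K: "1 \<le> K"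
  shows "param_norm2 d (2 * K * d) (6 * d + 2) (sawtooth_net d K q a)
    \<le> 12 * real K * real d * a\<^sup>2 + 8 * real (6 * d + 2) * (real d)\<^sup>2 * q\<^sup>2 / (real K * a\<^sup>2)
      + real (6 * d + 2) * q\<^sup>2 * (sqrt (real d) + 1)\<^sup>2 + 144 * real (6 * d + 2) * (real d)\<^sup>2 / q\<^sup>2"
proof -
  have second_layer_weights: "(\<Sum>m<6 * d + 2. \<Sum>j<2 * K * d. (2 * q * sqrt (real d) / (real K * a))\<^sup>2)
      = 8 * real (6 * d + 2) * (real d)\<^sup>2 * q\<^sup>2 / (real K * a\<^sup>2)"
    using K a by (simp add: power_mult_distrib power_divide field_simps) (simp add: power2_eq_square algebra_simps)
  show ?thesis
    unfolding sawtooth_net_def param_norm2.simps zero_power2 add_0_right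
    using sum_power2_hidden_weights[where K=K and d=d and a=a]
      sum_power2_hidden_offsets_le[OF K, where d=d and a=a] second_layer_weights
      sum_power2_second_layer_biases_le[where d=d and q=q] sum_power2_output_weights_le[where d=d and q=q]
    by (simp add: power_mult_distrib algebra_simps)
qed

text \<open>With q = d^(1/4) and a^2 = d^(5/4) / K every parameter group of the network has squared
  norm O(d^(5/2)).\<close>

definition balanced_sawtooth_net :: "nat \<Rightarrow> nat \<Rightarrow> params" where
  "balanced_sawtooth_net d K =
     sawtooth_net d K (sqrt (sqrt (real d))) (sqrt (sqrt (sqrt (real d)) ^ 5 / real K))"

lemma net_eval_balanced_sawtooth_net:
  assumes "1 \<le> d" and "1 \<le> K"
  shows "net_eval d (2 * K * d) (6 * d + 2) (balanced_sawtooth_net d K) x = sawtooth (3 * d) (inner_approx d K x)"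
  unfolding balanced_sawtooth_net_def by (rule net_eval_sawtooth_net) (use assms in simp_all)

lemma param_norm2_balanced_sawtooth_net_le:
  assumes d: "1 \<le> d" and K: "1 \<le> K"
  shows "param_norm2 d (2 * K * d) (6 * d + 2) (balanced_sawtooth_net d K) \<le> 1260 * (real d)\<^sup>2 * sqrt (real d)"
proof -
  define q where "q = sqrt (sqrt (real d))"
  define a where "a = sqrt (q ^ 5 / real K)"
  have q1: "1 \<le> q"
    using d by (simp add: q_def)
  have sqrt_d: "sqrt (real d) = q\<^sup>2"
    by (simp add: q_def)
  have "real d = (q\<^sup>2)\<^sup>2"
    by (simp flip: sqrt_d)
  then have d_q: "real d = q ^ 4"
    by (simp flip: power_mult)
  have a: "0 < a" and a2: "a\<^sup>2 = q ^ 5 / real K"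
    using q1 K by (simp_all add: a_def)
  have q_pow: "q ^ k \<le> q ^ 10" if "k \<le> 10" for k
    using that q1 by (rule power_increasing)
  have "param_norm2 d (2 * K * d) (6 * d + 2) (balanced_sawtooth_net d K)
      \<le> 12 * real K * real d * a\<^sup>2 + 8 * real (6 * d + 2) * (real d)\<^sup>2 * q\<^sup>2 / (real K * a\<^sup>2)
        + real (6 * d + 2) * q\<^sup>2 * (sqrt (real d) + 1)\<^sup>2 + 144 * real (6 * d + 2) * (real d)\<^sup>2 / q\<^sup>2"
    unfolding balanced_sawtooth_net_def q_def[symmetric] a_def[symmetric]
    using a K by (rule param_norm2_sawtooth_net_le)
  also have "\<dots> = 870 * q ^ 10 + 60 * q ^ 9 + 12 * q ^ 8 + 296 * q ^ 6 + 16 * q ^ 5 + 4 * q ^ 4 + 2 * q\<^sup>2"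
    using q1 K unfolding sqrt_d a2 of_nat_add of_nat_mult unfolding d_q
    by (simp add: field_simps) algebra
  also have "\<dots> \<le> 1260 * q ^ 10"
    using q_pow[of 9] q_pow[of 8] q_pow[of 6] q_pow[of 5] q_pow[of 4] q_pow[of 2] by simp
  also have "\<dots> = 1260 * (real d)\<^sup>2 * sqrt (real d)"
    unfolding sqrt_d unfolding d_q by (simp flip: power_mult power_add)
  finally show ?thesis .
qed

lemma param_norm2_nonneg: "0 \<le> param_norm2 d m1 m2 \<phi>"
  by (cases \<phi>) (simp add: sum_nonneg)

lemma R3_le_param_norm2:
  assumes "m1 \<le> \<omega>" and "m2 \<le> \<omega>" and "\<forall>x\<in>Xd d. net_eval d m1 m2 \<phi> x = f x"
  shows "R3 d f \<omega> \<le> param_norm2 d m1 m2 \<phi> / 3"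
proof -
  let ?S = "{param_norm2 d m1 m2 \<phi> / 3 | m1 m2 \<phi>.
      m1 \<le> \<omega> \<and> m2 \<le> \<omega> \<and> (\<forall>x\<in>Xd d. net_eval d m1 m2 \<phi> x = f x)}"
  have "bdd_below ?S"
  proof (rule bdd_belowI)
    fix y assume "y \<in> ?S"
    then obtain m1' m2' \<phi>' where "y = param_norm2 d m1' m2' \<phi>' / 3"
      by blast
    then show "0 \<le> y"
      using param_norm2_nonneg[of d m1' m2' \<phi>'] by simp
  qed
  moreover have "param_norm2 d m1 m2 \<phi> / 3 \<in> ?S"
    using assms by blast
  ultimately show ?thesis
    unfolding R3_def by (rule cInf_lower[rotated])
qed

lemma powr_five_halves: "0 \<le> x \<Longrightarrow> x powr (5 / 2) = x\<^sup>2 * sqrt x"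
  by (simp add: powr_add[of x 2 "1 / 2", simplified] powr_half_sqrt)

lemma abs_f_target_minus_balanced_sawtooth_net_le:
  assumes x: "x \<in> Xd d" and d: "1 \<le> d" and K: "1 \<le> K"
  shows "\<bar>f_target d x - net_eval d (2 * K * d) (6 * d + 2) (balanced_sawtooth_net d K) x\<bar>
    \<le> 144 * real d powr (5 / 2) / real K"
proof -
  have "\<bar>f_target d x - net_eval d (2 * K * d) (6 * d + 2) (balanced_sawtooth_net d K) x\<bar>
      = \<bar>sawtooth (3 * d) (sqrt (real d) * inner12 d x) - sawtooth (3 * d) (inner_approx d K x)\<bar>"
    unfolding f_target_def net_eval_balanced_sawtooth_net[OF d K] ..
  also have "\<dots> \<le> 12 * real (3 * d) * \<bar>sqrt (real d) * inner12 d x - inner_approx d K x\<bar>"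
    by (rule sawtooth_lipschitz)
  also have "\<dots> \<le> 12 * real (3 * d) * (4 * real d * sqrt (real d) / real K)"
    using abs_inner_approx_error[OF x K] by (intro mult_left_mono) (simp_all add: abs_minus_commute)
  also have "\<dots> = 144 * real d powr (5 / 2) / real K"
    by (simp add: powr_five_halves power2_eq_square)
  finally show ?thesis .
qed

theorem lemma14:
  shows "\<exists>C1 C2 :: real. \<forall>d K :: nat. d \<ge> 2 \<longrightarrow> K \<ge> 1 \<longrightarrow>
    (\<exists>m1 m2 (\<phi> :: params).
       m1 \<le> max (6 * d + 2) (2 * K * d) \<and> m2 \<le> max (6 * d + 2) (2 * K * d) \<and>
       (\<forall>x\<in>Xd d. \<bar>f_target d x - net_eval d m1 m2 \<phi> x\<bar> \<le> C1 * real d powr (5/2) / real K) \<and>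
       R3 d (net_eval d m1 m2 \<phi>) (max (6 * d + 2) (2 * K * d)) \<le> C2 * real d powr (5/2))"
proof (intro exI allI impI)
  fix d K :: nat
  assume "d \<ge> 2" and K: "K \<ge> 1"
  then have d: "1 \<le> d"
    by simp
  let ?\<omega> = "max (6 * d + 2) (2 * K * d)" and ?\<phi> = "balanced_sawtooth_net d K"
  have widths: "2 * K * d \<le> ?\<omega>" "6 * d + 2 \<le> ?\<omega>"
    by simp_all
  have "R3 d (net_eval d (2 * K * d) (6 * d + 2) ?\<phi>) ?\<omega> \<le> param_norm2 d (2 * K * d) (6 * d + 2) ?\<phi> / 3"
    using widths by (intro R3_le_param_norm2) simp_all
  also have "\<dots> \<le> 420 * real d powr (5 / 2)"
    using param_norm2_balanced_sawtooth_net_le[OF d K] by (simp add: powr_five_halves)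
  finally show "2 * K * d \<le> ?\<omega> \<and> 6 * d + 2 \<le> ?\<omega> \<and>
      (\<forall>x\<in>Xd d. \<bar>f_target d x - net_eval d (2 * K * d) (6 * d + 2) ?\<phi> x\<bar> \<le> 144 * real d powr (5 / 2) / real K) \<and>
      R3 d (net_eval d (2 * K * d) (6 * d + 2) ?\<phi>) ?\<omega> \<le> 420 * real d powr (5 / 2)"
    using widths abs_f_target_minus_balanced_sawtooth_net_le[OF _ d K] by blast
qed

end
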